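(* The kernel of the linear operator $L$ acting on $L^2(\mathbb{R}^3_v)^2$ is \[ \operatorname{Ker}L=\operatorname{span}\{(\sqrt{\mu_1},0),(0,\sqrt{\mu_2}),(m_1v_j\sqrt{\mu_1},m_2v_j\sqrt{\mu_2})\ (j=1,2,3),((m_1|v|^2-3)\sqrt{\mu_1},(m_2|v|^2-3)\sqrt{\mu_2})\}. \]
   Context: $m_1\ge m_2>0$, $n_{10},n_{20}>0$, $0\le\delta<1$, $0\le\omega<1$. $\mu_k(v)=n_{k0}(\frac{m_k}{2\pi})^{3/2}e^{-m_k|v|^2/2}$. Orthonormal functions in $L^2(\mathbb{R}^3_v)$: $e_{k1}=\frac{\sqrt{\mu_k}}{\sqrt{n_{k0}}}$, $e_{ki}=\sqrt{\frac{m_k}{n_{k0}}}v_{i-1}\sqrt{\mu_k}$ ($i=2,3,4$), $e_{k5}=\frac{m_k|v|^2-3}{\sqrt{6n_{k0}}}\sqrt{\mu_k}$; $P_kf=\sum_{i=1}^5\langle f,e_{ki}\rangle_{L^2_v}e_{ki}$ with $\langle f,g\rangle_{L^2_v}=\int fg\,dv$. $L_{kk}(f_k)=n_{k0}(P_kf_k-f_k)$; $L_{12}(f_1,f_2)=n_{20}(P_1f_1-f_1)+n_{20}\big[(1-\delta)\sum_{i=2}^4(\sqrt{\frac{n_{10}}{n_{20}}}\sqrt{\frac{m_1}{m_2}}\langle f_2,e_{2i}\rangle_{L^2_v}-\langle f_1,e_{1i}\rangle_{L^2_v})e_{1i}+(1-\omega)(\sqrt{\frac{n_{10}}{n_{20}}}\langle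 f_2,e_{25}\rangle_{L^2_v}-\langle f_1,e_{15}\rangle_{L^2_v})e_{15}\big]$; $L_{21}(f_1,f_2)=n_{10}(P_2f_2-f_2)+n_{10}\big[\frac{m_1}{m_2}(1-\delta)\sum_{i=2}^4(\sqrt{\frac{n_{20}}{n_{10}}}\sqrt{\frac{m_2}{m_1}}\langle f_1,e_{1i}\rangle_{L^2_v}-\langle f_2,e_{2i}\rangle_{L^2_v})e_{2i}+(1-\omega)(\sqrt{\frac{n_{20}}{n_{10}}}\langle f_1,e_{15}\rangle_{L^2_v}-\langle f_2,e_{25}\rangle_{L^2_v})e_{25}\big]$; $L(f_1,f_2)=(L_{11}(f_1)+L_{12}(f_1,f_2),\,L_{22}(f_2)+L_{21}(f_1,f_2))$. *)

theory Defs
  imports "HOL-Analysis.Analysis"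
begin

definition Maxw :: "real \<Rightarrow> real \<Rightarrow> real^3 \<Rightarrow> real" where
  "Maxw m n v = n * (m / (2 * pi)) powr (3/2) * exp (- m * (norm v)\<^sup>2 / 2)"

definition ip :: "(real^3 \<Rightarrow> real) \<Rightarrow> (real^3 \<Rightarrow> real) \<Rightarrow> real" where
  "ip f g = (LINT v|lborel. f v * g v)"

definition sq_integrable :: "(real^3 \<Rightarrow> real) \<Rightarrow> bool" where
  "sq_integrable f \<longleftrightarrow> f \<in> borel_measurable lborel \<and> integrable lborel (\<lambda>v. (f v)\<^sup>2)"

text \<open>Orthonormal functions: e_{k1}, e_{k,j+1} (j = 1,2,3), e_{k5}.\<close>
definition eA :: "real \<Rightarrow> real \<Rightarrow> real^3 \<Rightarrow> real" where
  "eA m n v = sqrt (Maxw m n v) / sqrt n"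

definition eV :: "real \<Rightarrow> real \<Rightarrow> 3 \<Rightarrow> real^3 \<Rightarrow> real" where
  "eV m n j v = sqrt (m / n) * v $ j * sqrt (Maxw m n v)"

definition eE :: "real \<Rightarrow> real \<Rightarrow> real^3 \<Rightarrow> real" where
  "eE m n v = (m * (norm v)\<^sup>2 - 3) / sqrt (6 * n) * sqrt (Maxw m n v)"

definition Proj :: "real \<Rightarrow> real \<Rightarrow> (real^3 \<Rightarrow> real) \<Rightarrow> real^3 \<Rightarrow> real" where
  "Proj m n f v = ip f (eA m n) * eA m n v
     + (\<Sum>j\<in>UNIV. ip f (eV m n j) * eV m n j v)
     + ip f (eE m n) * eE m n v"

definition Lop1 :: "real \<Rightarrow> real \<Rightarrow> real \<Rightarrow> real \<Rightarrow> real \<Rightarrow> real \<Rightarrow>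
    (real^3 \<Rightarrow> real) \<Rightarrow> (real^3 \<Rightarrow> real) \<Rightarrow> real^3 \<Rightarrow> real" where
  "Lop1 m1 m2 n10 n20 \<delta> \<omega> f1 f2 v =
     n10 * (Proj m1 n10 f1 v - f1 v)
     + n20 * (Proj m1 n10 f1 v - f1 v)
     + n20 * ((1 - \<delta>) * (\<Sum>j\<in>UNIV.
            (sqrt (n10 / n20) * sqrt (m1 / m2) * ip f2 (eV m2 n20 j) - ip f1 (eV m1 n10 j))
              * eV m1 n10 j v)
          + (1 - \<omega>) * (sqrt (n10 / n20) * ip f2 (eE m2 n20) - ip f1 (eE m1 n10)) * eE m1 n10 v)"

definition Lop2 :: "real \<Rightarrow> real \<Rightarrow> real \<Rightarrow> real \<Rightarrow> real \<Rightarrow> real \<Rightarrow>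
    (real^3 \<Rightarrow> real) \<Rightarrow> (real^3 \<Rightarrow> real) \<Rightarrow> real^3 \<Rightarrow> real" where
  "Lop2 m1 m2 n10 n20 \<delta> \<omega> f1 f2 v =
     n20 * (Proj m2 n20 f2 v - f2 v)
     + n10 * (Proj m2 n20 f2 v - f2 v)
     + n10 * (m1 / m2 * (1 - \<delta>) * (\<Sum>j\<in>UNIV.
            (sqrt (n20 / n10) * sqrt (m2 / m1) * ip f1 (eV m1 n10 j) - ip f2 (eV m2 n20 j))
              * eV m2 n20 j v)
          + (1 - \<omega>) * (sqrt (n20 / n10) * ip f1 (eE m1 n10) - ip f2 (eE m2 n20)) * eE m2 n20 v)"

end

theory Submission
  imports Defs "HOL-Probability.Distributions"
begin

text \<open>
  For each species, L_k is the positive multiple n10 + n20 of P_k f_k - f_k plus a combination of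
  the momentum and energy modes e_k2, ..., e_k5 whose coefficients measure, up to the factors
  1 - \<delta> and 1 - \<omega>, the mismatch between the normalised momenta and energies of f_1 and f_2.
  The Gaussian moments of the Maxwellian show that e_k1, ..., e_k5 are orthonormal, so the
  inner products of a function that agrees a.e. with a combination of them are exactly the
  coefficients of that combination. Hence L f = 0 forces the mismatches to vanish and
  f_k = P_k f_k, and after renormalising the e_ki this is the stated description of the kernel.
\<close>

section \<open>Gaussian moments\<close>

lemma has_bochner_integral_lborel_prod:
  fixes f :: "'a::euclidean_space \<Rightarrow> real \<Rightarrow> real"
  assumes int: "\<And>b. b \<in> Basis \<Longrightarrow> integrable lborel (f b)"
  shows "has_bochner_integral lborel (\<lambda>x. \<Prod>b\<in>Basis. f b (x \<bullet> b))
           (\<Prod>b\<in>Basis. integral\<^sup>L lborel (f b))"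
proof -
  interpret product_sigma_finite "\<lambda>_. lborel :: real measure" by standard
  let ?T = "\<lambda>g. \<Sum>b\<in>Basis. g b *\<^sub>R b :: 'a"
  have T: "?T \<in> measurable (\<Pi>\<^sub>M b\<in>Basis. lborel) borel" by measurable
  have [measurable]: "f b \<in> borel_measurable borel" if "b \<in> Basis" for b
    using int[OF that] by auto
  have meas: "(\<lambda>x::'a. \<Prod>b\<in>Basis. f b (x \<bullet> b)) \<in> borel_measurable borel" by measurable
  have comp: "(\<Prod>b\<in>Basis. f b (?T g \<bullet> b)) = (\<Prod>b\<in>Basis. f b (g b))" for g
    by (intro prod.cong) simp_all
  show ?thesis
    unfolding has_bochner_integral_iff
    by (subst (1 2) lborel_eq)
       (simp add: integrable_distr_eq[OF T meas] integral_distr[OF T meas] comp int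
          product_integrable_prod product_integral_prod)
qed

lemma has_bochner_integral_lborel_prod_vec:
  fixes f :: "'n::finite \<Rightarrow> real \<Rightarrow> real"
  assumes "\<And>j. integrable lborel (f j)"
  shows "has_bochner_integral lborel (\<lambda>v::real^'n. \<Prod>j\<in>UNIV. f j (v $ j))
           (\<Prod>j\<in>UNIV. integral\<^sup>L lborel (f j))"
proof -
  let ?ax = "\<lambda>j::'n. axis j (1::real)"
  have inj: "inj ?ax"
    by (auto simp: inj_def axis_eq_axis)
  have Basis: "(Basis :: (real^'n) set) = range ?ax"
    unfolding Basis_vec_def by auto
  define F where "F b = f (inv ?ax b)" for b
  have F_axis: "F (?ax j) = f j" for j
    by (simp add: F_def inv_f_f[OF inj])
  have "has_bochner_integral lborel (\<lambda>v::real^'n. \<Prod>b\<in>Basis. F b (v \<bullet> b))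
          (\<Prod>b\<in>Basis. integral\<^sup>L lborel (F b))"
    by (rule has_bochner_integral_lborel_prod) (simp add: F_def assms)
  then show ?thesis
    by (simp add: Basis prod.reindex[OF inj] F_axis inner_axis)
qed

lemma norm_squared_vec: "(norm v)\<^sup>2 = (\<Sum>j\<in>UNIV. (v $ j)\<^sup>2)"
  unfolding power2_norm_eq_inner by (simp add: inner_vec_def power2_eq_square)

definition gauss_moment :: "real \<Rightarrow> nat \<Rightarrow> real" where
  "gauss_moment m k = (\<integral>x. normal_density 0 (1 / sqrt m) x * x ^ k \<partial>lborel)"

context
  fixes m :: real
  assumes m: "m > 0"
begin

lemma integrable_gauss_moment:
  "integrable lborel (\<lambda>x. normal_density 0 (1 / sqrt m) x * x ^ k)"
  using integrable_normal_moment[of "1 / sqrt m" 0 k] m by simp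

lemma gauss_moment_0: "gauss_moment m 0 = 1"
  unfolding gauss_moment_def using m by simp

lemma gauss_moment_odd: "odd k \<Longrightarrow> gauss_moment m k = 0"
  unfolding gauss_moment_def
  using integral_normal_moment_odd[of "1 / sqrt m" 0] m by (auto elim!: oddE)

lemma gauss_moment_2: "gauss_moment m 2 = 1 / m"
  unfolding gauss_moment_def
  using integral_normal_moment_even[of "1 / sqrt m" 0 1] m by (simp add: power_divide)

lemma gauss_moment_4: "gauss_moment m 4 = 3 / m\<^sup>2"
  unfolding gauss_moment_def
  using integral_normal_moment_even[of "1 / sqrt m" 0 2] m
  by (simp add: power_divide fact_numeral power2_eq_square)

lemma prod_gauss_moment_two_components:
  fixes i j :: "'n::finite"
  shows "(\<Prod>l\<in>UNIV. gauss_moment m ((if l = i then a else 0) + (if l = j then b else 0)))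
     = (if i = j then gauss_moment m (a + b) else gauss_moment m a * gauss_moment m b)"
proof (cases "i = j")
  case True
  then have "(\<Prod>l\<in>UNIV. gauss_moment m ((if l = i then a else 0) + (if l = j then b else 0)))
      = (\<Prod>l\<in>UNIV. if l = i then gauss_moment m (a + b) else 1)"
    by (intro prod.cong) (simp_all add: gauss_moment_0)
  with True show ?thesis by simp
next
  case False
  then have "(\<Prod>l\<in>UNIV. gauss_moment m ((if l = i then a else 0) + (if l = j then b else 0)))
      = (\<Prod>l\<in>UNIV. (if l = i then gauss_moment m a else 1) * (if l = j then gauss_moment m b else 1))"
    by (intro prod.cong) (simp_all add: gauss_moment_0)
  with False show ?thesis by (simp add: prod.distrib)
qed

lemma Maxw_eq_prod_normal_density:
  "Maxw m n v = n * (\<Prod>j\<in>UNIV. normal_density 0 (1 / sqrt m) (v $ j))"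
proof -
  have density: "normal_density 0 (1 / sqrt m) x = sqrt (m / (2 * pi)) * exp (- m * x\<^sup>2 / 2)" for x
    using m by (simp add: normal_density_def real_sqrt_divide real_sqrt_mult field_simps)
  have "(m / (2 * pi)) powr (3 / 2) = sqrt (m / (2 * pi)) ^ 3"
    using m by (simp add: powr_half_sqrt[symmetric] powr_realpow[symmetric] powr_powr)
  moreover have "exp (- m * (norm v)\<^sup>2 / 2) = (\<Prod>j\<in>UNIV. exp (- m * (v $ j)\<^sup>2 / 2))"
    by (simp add: norm_squared_vec exp_sum sum_divide_distrib sum_distrib_left)
  ultimately show ?thesis
    by (simp add: Maxw_def density prod.distrib)
qed

lemma Maxw_moment_two_components:
  "has_bochner_integral lborel (\<lambda>v. (v $ i) ^ a * (v $ j) ^ b * Maxw m n v)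
     (n * (if i = j then gauss_moment m (a + b) else gauss_moment m a * gauss_moment m b))"
proof -
  let ?k = "\<lambda>l. (if l = i then a else 0) + (if l = j then b else 0)"
  have "has_bochner_integral lborel
      (\<lambda>v::real^3. \<Prod>l\<in>UNIV. normal_density 0 (1 / sqrt m) (v $ l) * (v $ l) ^ ?k l)
      (\<Prod>l\<in>UNIV. gauss_moment m (?k l))"
    unfolding gauss_moment_def
    by (rule has_bochner_integral_lborel_prod_vec) (rule integrable_gauss_moment)
  then have "has_bochner_integral lborel
      (\<lambda>v::real^3. n * (\<Prod>l\<in>UNIV. normal_density 0 (1 / sqrt m) (v $ l) * (v $ l) ^ ?k l))
      (n * (\<Prod>l\<in>UNIV. gauss_moment m (?k l)))"
    by (rule has_bochner_integral_mult_right)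
  moreover have "(\<Prod>l\<in>UNIV. (v $ l) ^ ?k l) = (v $ i) ^ a * (v $ j) ^ b" for v :: "real^3"
    by (simp add: power_add prod.distrib if_distrib[of "power _"] cong: if_cong)
  ultimately show ?thesis
    by (simp add: prod_gauss_moment_two_components Maxw_eq_prod_normal_density prod.distrib mult_ac)
qed

lemma Maxw_moment_1: "has_bochner_integral lborel (Maxw m n) n"
  using Maxw_moment_two_components[of i 0 i 0 n] by (simp add: gauss_moment_0)

lemma Maxw_moment_v: "has_bochner_integral lborel (\<lambda>v. v $ i * Maxw m n v) 0"
  using Maxw_moment_two_components[of i 1 i 0 n] by (simp add: gauss_moment_odd)

lemma Maxw_moment_vv:
  "has_bochner_integral lborel (\<lambda>v. v $ i * v $ j * Maxw m n v) (if i = j then n / m else 0)"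
  using Maxw_moment_two_components[of i 1 j 1 n] by (auto simp: numeral_2_eq_2[symmetric] gauss_moment_odd gauss_moment_2)

lemma Maxw_moment_v_vv: "has_bochner_integral lborel (\<lambda>v. v $ i * (v $ j)\<^sup>2 * Maxw m n v) 0"
  using Maxw_moment_two_components[of i 1 j 2 n] by (cases "i = j") (simp_all add: gauss_moment_odd)

lemma Maxw_moment_vv_vv:
  "has_bochner_integral lborel (\<lambda>v. (v $ i)\<^sup>2 * (v $ j)\<^sup>2 * Maxw m n v)
     (if i = j then 3 * n / m\<^sup>2 else n / m\<^sup>2)"
  using Maxw_moment_two_components[of i 2 j 2 n]
  by (cases "i = j") (simp_all add: gauss_moment_2 gauss_moment_4 power2_eq_square mult.commute)

lemma Maxw_moment_norm2: "has_bochner_integral lborel (\<lambda>v. (norm v)\<^sup>2 * Maxw m n v) (3 * n / m)"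
proof -
  have "has_bochner_integral lborel (\<lambda>v. v $ k * v $ k * Maxw m n v) (n / m)" for k
    using Maxw_moment_vv[of k k n] by simp
  then have "has_bochner_integral lborel (\<lambda>v. \<Sum>k\<in>UNIV. v $ k * v $ k * Maxw m n v)
      (\<Sum>k\<in>(UNIV::3 set). n / m)"
    by (intro has_bochner_integral_sum)
  then show ?thesis
    unfolding norm_squared_vec by (simp add: sum_distrib_right power2_eq_square)
qed

lemma Maxw_moment_v_norm2:
  "has_bochner_integral lborel (\<lambda>v. v $ i * (norm v)\<^sup>2 * Maxw m n v) 0"
proof -
  have "has_bochner_integral lborel (\<lambda>v. \<Sum>k\<in>UNIV. v $ i * (v $ k)\<^sup>2 * Maxw m n v)
      (\<Sum>k\<in>(UNIV::3 set). 0)"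
    by (intro has_bochner_integral_sum Maxw_moment_v_vv)
  then show ?thesis
    unfolding norm_squared_vec by (simp add: sum_distrib_right sum_distrib_left mult.assoc)
qed

lemma Maxw_moment_norm4:
  "has_bochner_integral lborel (\<lambda>v. ((norm v)\<^sup>2)\<^sup>2 * Maxw m n v) (15 * n / m\<^sup>2)"
proof -
  have "has_bochner_integral lborel
      (\<lambda>v. \<Sum>k\<in>UNIV. \<Sum>l\<in>UNIV. (v $ k)\<^sup>2 * (v $ l)\<^sup>2 * Maxw m n v)
      (\<Sum>k\<in>(UNIV::3 set). \<Sum>l\<in>(UNIV::3 set). if k = l then 3 * n / m\<^sup>2 else n / m\<^sup>2)"
    by (intro has_bochner_integral_sum Maxw_moment_vv_vv)
  moreover have "(\<Sum>k\<in>(UNIV::3 set). \<Sum>l\<in>(UNIV::3 set). if k = l then 3 * n / m\<^sup>2 else n / m\<^sup>2)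
      = 15 * n / m\<^sup>2"
    by (simp add: sum_3 field_simps)
  ultimately show ?thesis
    unfolding norm_squared_vec by (simp add: power2_eq_square sum_distrib_right sum_distrib_left mult_ac)
qed

end

section \<open>Orthonormality of the basis\<close>

lemma Maxw_nonneg: "n \<ge> 0 \<Longrightarrow> Maxw m n v \<ge> 0"
  by (simp add: Maxw_def)

lemma sqrt_Maxw_mult:
  "n \<ge> 0 \<Longrightarrow> (x * sqrt (Maxw m n v)) * (y * sqrt (Maxw m n v)) = x * y * Maxw m n v"
  using Maxw_nonneg[of n m v] by (simp add: mult_ac)

lemma eA_eq: "eA m n v = 1 / sqrt n * sqrt (Maxw m n v)"
  by (simp add: eA_def)

lemma borel_measurable_e [measurable]:
  "eA m n \<in> borel_measurable borel"
  "eV m n j \<in> borel_measurable borel"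
  "eE m n \<in> borel_measurable borel"
  unfolding eA_def eV_def eE_def Maxw_def by measurable

lemma has_bochner_integral_scaled:
  fixes f g :: "'a \<Rightarrow> real"
  assumes "has_bochner_integral M f x" "\<And>v. g v = c * f v" "y = c * x"
  shows "has_bochner_integral M g y"
proof -
  have "g = (\<lambda>v. c * f v)"
    using assms(2) by auto
  with assms(1,3) show ?thesis
    by (simp add: has_bochner_integral_mult_right)
qed

context
  fixes m n :: real
  assumes m: "m > 0" and n: "n > 0"
begin

lemma Gram_AA: "has_bochner_integral lborel (\<lambda>v. eA m n v * eA m n v) 1"
  by (rule has_bochner_integral_scaled[OF Maxw_moment_1[OF m, of n], where c = "1 / n"])
     (use n in \<open>simp_all only: eA_eq sqrt_Maxw_mult less_imp_le, simp_all\<close>)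

lemma Gram_AV: "has_bochner_integral lborel (\<lambda>v. eA m n v * eV m n j v) 0"
  by (rule has_bochner_integral_scaled[OF Maxw_moment_v[OF m, of j n],
        where c = "sqrt (m / n) / sqrt n"])
     (use n in \<open>simp_all only: eA_eq eV_def sqrt_Maxw_mult less_imp_le, simp_all\<close>)

lemma Gram_AE: "has_bochner_integral lborel (\<lambda>v. eA m n v * eE m n v) 0"
proof -
  have "has_bochner_integral lborel (\<lambda>v. m * ((norm v)\<^sup>2 * Maxw m n v) - 3 * Maxw m n v)
      (m * (3 * n / m) - 3 * n)"
    by (intro has_bochner_integral_diff has_bochner_integral_mult_right
        Maxw_moment_norm2[OF m] Maxw_moment_1[OF m])
  then show ?thesis
    by (rule has_bochner_integral_scaled[where c = "1 / (sqrt n * sqrt (6 * n))"])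
       (use m n in \<open>simp_all only: eA_eq eE_def sqrt_Maxw_mult less_imp_le,
         simp_all add: field_simps\<close>)
qed

lemma Gram_VV:
  "has_bochner_integral lborel (\<lambda>v. eV m n i v * eV m n j v) (if i = j then 1 else 0)"
  by (rule has_bochner_integral_scaled[OF Maxw_moment_vv[OF m, of i j n], where c = "m / n"])
     (use m n in \<open>simp_all only: eV_def sqrt_Maxw_mult less_imp_le, simp_all add: field_simps\<close>)

lemma Gram_VE: "has_bochner_integral lborel (\<lambda>v. eV m n j v * eE m n v) 0"
proof -
  have "has_bochner_integral lborel
      (\<lambda>v. m * (v $ j * (norm v)\<^sup>2 * Maxw m n v) - 3 * (v $ j * Maxw m n v)) (m * 0 - 3 * 0)"
    by (intro has_bochner_integral_diff has_bochner_integral_mult_right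
        Maxw_moment_v_norm2[OF m] Maxw_moment_v[OF m])
  then show ?thesis
    by (rule has_bochner_integral_scaled[where c = "sqrt (m / n) / sqrt (6 * n)"])
       (use n in \<open>simp_all only: eV_def eE_def sqrt_Maxw_mult less_imp_le,
         simp_all add: field_simps\<close>)
qed

lemma Gram_EE: "has_bochner_integral lborel (\<lambda>v. eE m n v * eE m n v) 1"
proof -
  have "has_bochner_integral lborel
      (\<lambda>v. m\<^sup>2 * (((norm v)\<^sup>2)\<^sup>2 * Maxw m n v) - 6 * m * ((norm v)\<^sup>2 * Maxw m n v)
        + 9 * Maxw m n v)
      (m\<^sup>2 * (15 * n / m\<^sup>2) - 6 * m * (3 * n / m) + 9 * n)"
    by (intro has_bochner_integral_add has_bochner_integral_diff has_bochner_integral_mult_right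
        Maxw_moment_norm4[OF m] Maxw_moment_norm2[OF m] Maxw_moment_1[OF m])
  then show ?thesis
    by (rule has_bochner_integral_scaled[where c = "1 / (6 * n)"])
       (use m n in \<open>simp_all only: eE_def sqrt_Maxw_mult less_imp_le,
         simp_all add: field_simps power2_eq_square\<close>)
qed

end

section \<open>Coefficients of a basis combination\<close>

definition basis_comb ::
    "real \<Rightarrow> real \<Rightarrow> real \<Rightarrow> (3 \<Rightarrow> real) \<Rightarrow> real \<Rightarrow> real^3 \<Rightarrow> real" where
  "basis_comb m n a c d v = a * eA m n v + (\<Sum>j\<in>UNIV. c j * eV m n j v) + d * eE m n v"

lemma Proj_eq_basis_comb:
  "Proj m n f = basis_comb m n (ip f (eA m n)) (\<lambda>j. ip f (eV m n j)) (ip f (eE m n))"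
  by (simp add: fun_eq_iff Proj_def basis_comb_def)

lemma basis_comb_0: "basis_comb m n 0 (\<lambda>_. 0) 0 v = 0"
  by (simp add: basis_comb_def)

lemma has_bochner_integral_basis_comb_mult:
  assumes "has_bochner_integral lborel (\<lambda>v. eA m n v * g v) IA"
    and "\<And>j. has_bochner_integral lborel (\<lambda>v. eV m n j v * g v) (IV j)"
    and "has_bochner_integral lborel (\<lambda>v. eE m n v * g v) IE"
  shows "has_bochner_integral lborel (\<lambda>v. basis_comb m n a c d v * g v)
           (a * IA + (\<Sum>j\<in>UNIV. c j * IV j) + d * IE)"
proof -
  have "has_bochner_integral lborel
      (\<lambda>v. a * (eA m n v * g v) + (\<Sum>j\<in>UNIV. c j * (eV m n j v * g v)) + d * (eE m n v * g v))
      (a * IA + (\<Sum>j\<in>UNIV. c j * IV j) + d * IE)"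
    by (intro has_bochner_integral_add has_bochner_integral_mult_right has_bochner_integral_sum assms)
  then show ?thesis
    by (simp add: basis_comb_def algebra_simps sum_distrib_left sum_distrib_right)
qed

lemma ip_eq_of_AE_eq:
  assumes "f \<in> borel_measurable lborel" "g \<in> borel_measurable lborel"
    and "AE v in lborel. f v = h v"
    and "has_bochner_integral lborel (\<lambda>v. h v * g v) I"
  shows "ip f g = I"
proof -
  have "(\<lambda>v. h v * g v) \<in> borel_measurable lborel"
    using assms(4) by (auto dest: has_bochner_integral_integrable)
  with assms(1-3) have "ip f g = (\<integral>v. h v * g v \<partial>lborel)"
    unfolding ip_def by (intro integral_cong_AE) auto
  with assms(4) show ?thesis
    by (simp add: has_bochner_integral_integral_eq)
qed

context
  fixes m n :: real
  assumes m: "m > 0" and n: "n > 0"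
begin

lemma ip_basis_comb:
  assumes f: "f \<in> borel_measurable lborel"
    and ae: "AE v in lborel. f v = basis_comb m n a c d v"
  shows "ip f (eA m n) = a" "ip f (eV m n k) = c k" "ip f (eE m n) = d"
proof -
  have fe: "f \<in> borel_measurable lborel" "eA m n \<in> borel_measurable lborel"
    "eV m n k \<in> borel_measurable lborel" "eE m n \<in> borel_measurable lborel"
    using f by measurable
  have VA: "has_bochner_integral lborel (\<lambda>v. eV m n j v * eA m n v) 0" for j
    using Gram_AV[OF m n, of j] by (simp add: mult.commute)
  have EA: "has_bochner_integral lborel (\<lambda>v. eE m n v * eA m n v) 0"
    using Gram_AE[OF m n] by (simp add: mult.commute)
  have EV: "has_bochner_integral lborel (\<lambda>v. eE m n v * eV m n k v) 0"
    using Gram_VE[OF m n, of k] by (simp add: mult.commute)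
  have "ip f (eA m n) = a * 1 + (\<Sum>j\<in>UNIV. c j * 0) + d * 0"
    by (intro ip_eq_of_AE_eq[OF fe(1,2) ae] has_bochner_integral_basis_comb_mult Gram_AA VA EA m n)
  then show "ip f (eA m n) = a"
    by simp
  have "ip f (eV m n k) = a * 0 + (\<Sum>j\<in>UNIV. c j * (if j = k then 1 else 0)) + d * 0"
    by (intro ip_eq_of_AE_eq[OF fe(1,3) ae] has_bochner_integral_basis_comb_mult
        Gram_AV Gram_VV EV m n)
  then show "ip f (eV m n k) = c k"
    by (simp add: if_distrib cong: if_cong)
  have "ip f (eE m n) = a * 0 + (\<Sum>j\<in>UNIV. c j * 0) + d * 1"
    by (intro ip_eq_of_AE_eq[OF fe(1,4) ae] has_bochner_integral_basis_comb_mult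
        Gram_AE Gram_VE Gram_EE m n)
  then show "ip f (eE m n) = d"
    by simp
qed

lemma AE_eq_basis_comb_iff:
  assumes f: "f \<in> borel_measurable lborel"
  shows "(AE v in lborel. f v = basis_comb m n a c d v) \<longleftrightarrow>
    (AE v in lborel. f v = Proj m n f v) \<and>
    ip f (eA m n) = a \<and> (\<forall>j. ip f (eV m n j) = c j) \<and> ip f (eE m n) = d"
proof
  assume ae: "AE v in lborel. f v = basis_comb m n a c d v"
  then have "ip f (eA m n) = a" "\<forall>j. ip f (eV m n j) = c j" "ip f (eE m n) = d"
    using ip_basis_comb[OF f] by auto
  moreover from this have "Proj m n f = basis_comb m n a c d"
    by (simp add: Proj_eq_basis_comb)
  ultimately show "(AE v in lborel. f v = Proj m n f v) \<and>
      ip f (eA m n) = a \<and> (\<forall>j. ip f (eV m n j) = c j) \<and> ip f (eE m n) = d"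
    using ae by simp
next
  assume H: "(AE v in lborel. f v = Proj m n f v) \<and>
      ip f (eA m n) = a \<and> (\<forall>j. ip f (eV m n j) = c j) \<and> ip f (eE m n) = d"
  then have "c = (\<lambda>j. ip f (eV m n j))"
    by auto
  with H show "AE v in lborel. f v = basis_comb m n a c d v"
    by (auto simp: Proj_eq_basis_comb)
qed

lemma AE_Proj_defect_eq_0_iff:
  assumes f: "f \<in> borel_measurable lborel" and N: "N > 0" and K: "K > 0"
  shows "(AE v in lborel. N * (Proj m n f v - f v) + K * basis_comb m n 0 X Y v = 0) \<longleftrightarrow>
    (AE v in lborel. f v = Proj m n f v) \<and> (\<forall>j. X j = 0) \<and> Y = 0"
proof
  assume "AE v in lborel. N * (Proj m n f v - f v) + K * basis_comb m n 0 X Y v = 0"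
  \<comment> \<open>f itself is a.e. a basis combination, so no orthogonality of f - P f is needed\<close>
  then have "AE v in lborel. f v = basis_comb m n (ip f (eA m n))
      (\<lambda>j. ip f (eV m n j) + K / N * X j) (ip f (eE m n) + K / N * Y) v"
  proof eventually_elim
    case (elim v)
    with N have "f v = Proj m n f v + K / N * basis_comb m n 0 X Y v"
      by (simp add: field_simps)
    then show ?case
      by (simp add: Proj_eq_basis_comb basis_comb_def algebra_simps sum.distrib sum_distrib_left)
  qed
  with N K show "(AE v in lborel. f v = Proj m n f v) \<and> (\<forall>j. X j = 0) \<and> Y = 0"
    by (simp add: AE_eq_basis_comb_iff[OF f])
next
  assume H: "(AE v in lborel. f v = Proj m n f v) \<and> (\<forall>j. X j = 0) \<and> Y = 0"
  then have "X = (\<lambda>_. 0)" "Y = 0"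
    by auto
  from H have "AE v in lborel. f v = Proj m n f v"
    by simp
  then show "AE v in lborel. N * (Proj m n f v - f v) + K * basis_comb m n 0 X Y v = 0"
    by eventually_elim (simp add: \<open>X = (\<lambda>_. 0)\<close> \<open>Y = 0\<close> basis_comb_0)
qed

end

section \<open>The kernel of the two-species operator\<close>

lemma scaled_ratio_diff_eq_0_iff:
  fixes t a b x y :: real
  assumes "t \<noteq> 0" "a > 0" "b > 0"
  shows "t * (a / b * y - x) = 0 \<longleftrightarrow> x / a = y / b"
  using assms by (auto simp: field_simps)

lemma AE_Lop1_eq_0_iff:
  assumes m1: "m1 > 0" and m2: "m2 > 0" and n1: "n10 > 0" and n2: "n20 > 0"
    and \<delta>: "\<delta> < 1" and \<omega>: "\<omega> < 1" and f1: "f1 \<in> borel_measurable lborel"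
  shows "(AE v in lborel. Lop1 m1 m2 n10 n20 \<delta> \<omega> f1 f2 v = 0) \<longleftrightarrow>
    (AE v in lborel. f1 v = Proj m1 n10 f1 v) \<and>
    (\<forall>j. ip f1 (eV m1 n10 j) / sqrt (m1 * n10) = ip f2 (eV m2 n20 j) / sqrt (m2 * n20)) \<and>
    ip f1 (eE m1 n10) / sqrt (6 * n10) = ip f2 (eE m2 n20) / sqrt (6 * n20)"
proof -
  let ?X = "\<lambda>j. (1 - \<delta>) *
    (sqrt (m1 * n10) / sqrt (m2 * n20) * ip f2 (eV m2 n20 j) - ip f1 (eV m1 n10 j))"
  let ?Y = "(1 - \<omega>) * (sqrt (6 * n10) / sqrt (6 * n20) * ip f2 (eE m2 n20) - ip f1 (eE m1 n10))"
  have "sqrt (n10 / n20) * sqrt (m1 / m2) = sqrt (m1 * n10) / sqrt (m2 * n20)"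
       "sqrt (n10 / n20) = sqrt (6 * n10) / sqrt (6 * n20)"
    by (simp_all add: real_sqrt_mult real_sqrt_divide mult_ac)
  then have "Lop1 m1 m2 n10 n20 \<delta> \<omega> f1 f2 v =
      (n10 + n20) * (Proj m1 n10 f1 v - f1 v) + n20 * basis_comb m1 n10 0 ?X ?Y v" for v
    by (simp add: Lop1_def basis_comb_def algebra_simps sum_distrib_left)
  then have "(AE v in lborel. Lop1 m1 m2 n10 n20 \<delta> \<omega> f1 f2 v = 0) \<longleftrightarrow>
      (AE v in lborel. f1 v = Proj m1 n10 f1 v) \<and> (\<forall>j. ?X j = 0) \<and> ?Y = 0"
    using m1 n1 n2 f1 by (simp add: AE_Proj_defect_eq_0_iff)
  moreover have "(\<forall>j. ?X j = 0) \<longleftrightarrow>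
      (\<forall>j. ip f1 (eV m1 n10 j) / sqrt (m1 * n10) = ip f2 (eV m2 n20 j) / sqrt (m2 * n20))"
    by (intro all_cong1 scaled_ratio_diff_eq_0_iff) (use \<delta> m1 m2 n1 n2 in auto)
  moreover have "?Y = 0 \<longleftrightarrow> ip f1 (eE m1 n10) / sqrt (6 * n10) = ip f2 (eE m2 n20) / sqrt (6 * n20)"
    by (rule scaled_ratio_diff_eq_0_iff) (use \<omega> n1 n2 in auto)
  ultimately show ?thesis
    by blast
qed

lemma AE_Lop2_eq_0_iff:
  assumes m1: "m1 > 0" and m2: "m2 > 0" and n1: "n10 > 0" and n2: "n20 > 0"
    and \<delta>: "\<delta> < 1" and \<omega>: "\<omega> < 1" and f2: "f2 \<in> borel_measurable lborel"
  shows "(AE v in lborel. Lop2 m1 m2 n10 n20 \<delta> \<omega> f1 f2 v = 0) \<longleftrightarrow>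
    (AE v in lborel. f2 v = Proj m2 n20 f2 v) \<and>
    (\<forall>j. ip f1 (eV m1 n10 j) / sqrt (m1 * n10) = ip f2 (eV m2 n20 j) / sqrt (m2 * n20)) \<and>
    ip f1 (eE m1 n10) / sqrt (6 * n10) = ip f2 (eE m2 n20) / sqrt (6 * n20)"
proof -
  let ?X = "\<lambda>j. m1 / m2 * (1 - \<delta>) *
    (sqrt (m2 * n20) / sqrt (m1 * n10) * ip f1 (eV m1 n10 j) - ip f2 (eV m2 n20 j))"
  let ?Y = "(1 - \<omega>) * (sqrt (6 * n20) / sqrt (6 * n10) * ip f1 (eE m1 n10) - ip f2 (eE m2 n20))"
  have "sqrt (n20 / n10) * sqrt (m2 / m1) = sqrt (m2 * n20) / sqrt (m1 * n10)"
       "sqrt (n20 / n10) = sqrt (6 * n20) / sqrt (6 * n10)"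
    by (simp_all add: real_sqrt_mult real_sqrt_divide mult_ac)
  then have "Lop2 m1 m2 n10 n20 \<delta> \<omega> f1 f2 v =
      (n20 + n10) * (Proj m2 n20 f2 v - f2 v) + n10 * basis_comb m2 n20 0 ?X ?Y v" for v
    by (simp add: Lop2_def basis_comb_def algebra_simps sum_distrib_left)
  then have "(AE v in lborel. Lop2 m1 m2 n10 n20 \<delta> \<omega> f1 f2 v = 0) \<longleftrightarrow>
      (AE v in lborel. f2 v = Proj m2 n20 f2 v) \<and> (\<forall>j. ?X j = 0) \<and> ?Y = 0"
    using m2 n1 n2 f2 by (simp add: AE_Proj_defect_eq_0_iff)
  moreover have "(\<forall>j. ?X j = 0) \<longleftrightarrow>
      (\<forall>j. ip f1 (eV m1 n10 j) / sqrt (m1 * n10) = ip f2 (eV m2 n20 j) / sqrt (m2 * n20))"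
    by (intro all_cong1 trans[OF scaled_ratio_diff_eq_0_iff eq_commute])
       (use \<delta> m1 m2 n1 n2 in auto)
  moreover have "?Y = 0 \<longleftrightarrow> ip f1 (eE m1 n10) / sqrt (6 * n10) = ip f2 (eE m2 n20) / sqrt (6 * n20)"
    by (rule trans[OF scaled_ratio_diff_eq_0_iff eq_commute]) (use \<omega> n1 n2 in auto)
  ultimately show ?thesis
    by blast
qed

lemma AE_eq_kernel_form_iff:
  assumes m: "m > 0" and n: "n > 0" and f: "f \<in> borel_measurable lborel"
  shows "(AE v in lborel. f v = a * sqrt (Maxw m n v)
            + (\<Sum>j\<in>UNIV. c $ j * (m * v $ j * sqrt (Maxw m n v)))
            + d * ((m * (norm v)\<^sup>2 - 3) * sqrt (Maxw m n v))) \<longleftrightarrow>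
    (AE v in lborel. f v = Proj m n f v) \<and> ip f (eA m n) / sqrt n = a \<and>
    (\<forall>j. ip f (eV m n j) / sqrt (m * n) = c $ j) \<and> ip f (eE m n) / sqrt (6 * n) = d"
proof -
  have "sqrt (m * n) * sqrt (m / n) = m"
    using m n by (simp add: real_sqrt_mult real_sqrt_divide)
  then have V: "c $ j * sqrt (m * n) * eV m n j v = c $ j * (m * v $ j * sqrt (Maxw m n v))" for j v
    unfolding eV_def by (metis mult.assoc mult.left_commute)
  have "a * sqrt (Maxw m n v) + (\<Sum>j\<in>UNIV. c $ j * (m * v $ j * sqrt (Maxw m n v)))
        + d * ((m * (norm v)\<^sup>2 - 3) * sqrt (Maxw m n v))
      = basis_comb m n (a * sqrt n) (\<lambda>j. c $ j * sqrt (m * n)) (d * sqrt (6 * n)) v" for v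
    using n by (simp add: basis_comb_def eA_def eE_def V)
  then show ?thesis
    using m n by (simp add: AE_eq_basis_comb_iff[OF m n f] field_simps)
qed

theorem lemma3p2:
  fixes m1 m2 n10 n20 \<delta> \<omega> :: real
    and f1 f2 :: "real^3 \<Rightarrow> real"
  assumes "m1 \<ge> m2" "m2 > 0" "n10 > 0" "n20 > 0"
    and "0 \<le> \<delta>" "\<delta> < 1" "0 \<le> \<omega>" "\<omega> < 1"
    and "sq_integrable f1" "sq_integrable f2"
  shows "((AE v in lborel. Lop1 m1 m2 n10 n20 \<delta> \<omega> f1 f2 v = 0) \<and>
          (AE v in lborel. Lop2 m1 m2 n10 n20 \<delta> \<omega> f1 f2 v = 0))
    \<longleftrightarrow> (\<exists>a b d :: real. \<exists>c :: real^3.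
          (AE v in lborel.
             f1 v = a * sqrt (Maxw m1 n10 v)
                    + (\<Sum>j\<in>UNIV. c $ j * (m1 * v $ j * sqrt (Maxw m1 n10 v)))
                    + d * ((m1 * (norm v)\<^sup>2 - 3) * sqrt (Maxw m1 n10 v))
           \<and> f2 v = b * sqrt (Maxw m2 n20 v)
                    + (\<Sum>j\<in>UNIV. c $ j * (m2 * v $ j * sqrt (Maxw m2 n20 v)))
                    + d * ((m2 * (norm v)\<^sup>2 - 3) * sqrt (Maxw m2 n20 v))))"
proof -
  have m1: "m1 > 0" and m2: "m2 > 0" and n1: "n10 > 0" and n2: "n20 > 0"
    using assms(1-4) by auto
  have f1: "f1 \<in> borel_measurable lborel" and f2: "f2 \<in> borel_measurable lborel"
    using assms(9,10) by (simp_all add: sq_integrable_def)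
  show ?thesis
    unfolding AE_Lop1_eq_0_iff[OF m1 m2 n1 n2 assms(6,8) f1]
      AE_Lop2_eq_0_iff[OF m1 m2 n1 n2 assms(6,8) f2] AE_conj_iff
      AE_eq_kernel_form_iff[OF m1 n1 f1] AE_eq_kernel_form_iff[OF m2 n2 f2]
    by (auto intro!: exI[of _ "\<chi> j. ip f1 (eV m1 n10 j) / sqrt (m1 * n10)"])
qed

end
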